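(* Let $u\in\mathbb{R}^m$ and let $\mathcal{P}\subset\mathbb{R}^n$ be a nonempty compact convex set. If $-J_{f,0}^{-1}Mg(x,u)\in\mathcal{P}$ for all $x\in\mathcal{P}$, then $u$ is solvable, and there is at least one $x\in\mathcal{P}$ with $f(x,u)=0$.
   Context: Let $f:\mathbb{R}^n\times\mathbb{R}^m\to\mathbb{R}^n$ be continuous and differentiable, and suppose there are a continuously differentiable map $\psi:\mathbb{R}^n\times\mathbb{R}^m\to\mathbb{R}^q$ and a constant matrix $M\in\mathbb{R}^{n\times q}$ with $f(x,u)=M\psi(x,u)$. There is a base point $(x_0,u_0)$ with $f(x_0,u_0)=0$ at which $J_{f,0}=\frac{\partial f}{\partial x}\big|_{(x_0,u_0)}\in\mathbb{R}^{n\times n}$ is nonsingular. Let $J_{\psi,0}=\frac{\partial \psi}{\partial x}\big|_{(x_0,u_0)}\in\mathbb{R}^{q\times n}$ and define $g(x,u)=\psi(x,u)-J_{\psi,0}x$ (so $f(x,u)=J_{f,0}x+Mg(x,u)$). A control $u\in\mathbb{R}^m$ is called solvable if there exists $x\in\mathbb{R}^n$ with $f(x,u)=0$. *)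

theory Defs
  imports "HOL-Analysis.Analysis"
begin

definition solvable :: "(real^'n \<Rightarrow> real^'m \<Rightarrow> real^'n) \<Rightarrow> real^'m \<Rightarrow> bool" where
  "solvable f u \<longleftrightarrow> (\<exists>x. f x u = 0)"

definition gfun :: "(real^'n \<Rightarrow> real^'m \<Rightarrow> real^'q) \<Rightarrow> real^'n^'q \<Rightarrow> real^'n \<Rightarrow> real^'m \<Rightarrow> real^'q" where
  "gfun \<psi> J\<psi> x u = \<psi> x u - J\<psi> *v x"

end

theory Submission
  imports Defs
begin

text \<open>The map \<open>T x = - Jf\<^sup>-\<^sup>1 M g(x,u)\<close> is continuous and maps \<open>P\<close> into itself, so by
  Brouwer's theorem it has a fixed point \<open>x \<in> P\<close>. Since \<open>f = M \<psi>\<close>, uniqueness of derivatives at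
  the base point gives \<open>Jf = M J\<psi>\<close>; multiplying the fixed point equation by \<open>Jf\<close> then yields
  \<open>Jf x = - M \<psi>(x,u) + M J\<psi> x = - f(x,u) + Jf x\<close>, i.e. \<open>f(x,u) = 0\<close>.\<close>

lemma matrix_inv_right:
  fixes A :: "'a::semiring_1^'n^'n"
  assumes "invertible A"
  shows "A ** matrix_inv A = mat 1"
  using assms unfolding invertible_def matrix_inv_def by (rule someI_ex[THEN conjunct1])

lemma matrix_vector_mult_uminus_right:
  fixes A :: "real^'n^'m"
  shows "A *v (- x) = - (A *v x)"
  using matrix_vector_mult_diff_distrib[of A 0 x] by simp

lemma has_derivative_matrix_factor:
  fixes \<phi> :: "real^'n \<Rightarrow> real^'q" and M :: "real^'q^'m"
  assumes "((\<lambda>x. M *v \<phi> x) has_derivative (\<lambda>h. A *v h)) (at a)"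
    and "(\<phi> has_derivative (\<lambda>h. B *v h)) (at a)"
  shows "A = M ** B"
proof -
  have "((\<lambda>x. M *v \<phi> x) has_derivative (\<lambda>h. M *v (B *v h))) (at a)"
    by (rule bounded_linear.has_derivative[OF matrix_vector_mul_bounded_linear assms(2)])
  then have "(\<lambda>h. A *v h) = (\<lambda>h. M *v (B *v h))"
    using has_derivative_unique[OF assms(1)] by blast
  then show ?thesis
    by (intro matrix_eq[THEN iffD2]) (metis matrix_vector_mul_assoc)
qed

lemma fixed_point_imp_zero:
  fixes A :: "real^'n^'n" and M :: "real^'q^'n" and B :: "real^'n^'q"
  assumes "A = M ** B" and "invertible A"
    and "x = - (matrix_inv A *v (M *v (y - B *v x)))"
  shows "M *v y = 0"
proof -
  have "A *v x = - (M *v (y - B *v x))"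
    by (subst assms(3))
      (simp add: matrix_vector_mult_uminus_right matrix_vector_mul_assoc matrix_mul_assoc
        matrix_inv_right[OF assms(2)])
  also have "\<dots> = - (M *v y) + A *v x"
    by (simp add: assms(1) matrix_vector_mult_diff_distrib matrix_vector_mul_assoc)
  finally show ?thesis by simp
qed

lemma continuous_on_fixed_snd:
  assumes "continuous_on UNIV (\<lambda>(x, v). \<phi> x v)"
  shows "continuous_on S (\<lambda>x. \<phi> x u)"
proof -
  have "continuous_on S ((\<lambda>(x, v). \<phi> x v) \<circ> (\<lambda>x. (x, u)))"
    by (rule continuous_on_compose) (auto intro!: continuous_intros continuous_on_subset[OF assms])
  then show ?thesis by (simp add: o_def)
qed

theorem lemma2:
  fixes f :: "real^'n \<Rightarrow> real^'m \<Rightarrow> real^'n"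
    and \<psi> :: "real^'n \<Rightarrow> real^'m \<Rightarrow> real^'q"
    and M :: "real^'q^'n"
    and x0 :: "real^'n" and u0 :: "real^'m"
    and Jf :: "real^'n^'n" and J\<psi> :: "real^'n^'q"
    and u :: "real^'m" and P :: "(real^'n) set"
  assumes f_cont: "continuous_on UNIV (\<lambda>(x, v). f x v)"
    and f_diff: "(\<lambda>(x, v). f x v) differentiable_on UNIV"
    and \<psi>_C1: "\<exists>D :: ((real^'n) \<times> (real^'m)) \<Rightarrow> ((real^'n) \<times> (real^'m)) \<Rightarrow>\<^sub>L (real^'q).
                 (\<forall>z. ((\<lambda>(x, v). \<psi> x v) has_derivative blinfun_apply (D z)) (at z))
                 \<and> continuous_on UNIV D"
    and f_M: "\<And>x v. f x v = M *v \<psi> x v"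
    and base: "f x0 u0 = 0"
    and Jf_def: "((\<lambda>x. f x u0) has_derivative (\<lambda>h. Jf *v h)) (at x0)"
    and Jf_inv: "invertible Jf"
    and J\<psi>_def: "((\<lambda>x. \<psi> x u0) has_derivative (\<lambda>h. J\<psi> *v h)) (at x0)"
    and P_ne: "P \<noteq> {}" and P_compact: "compact P" and P_convex: "convex P"
    and inv: "\<forall>x\<in>P. - (matrix_inv Jf *v (M *v gfun \<psi> J\<psi> x u)) \<in> P"
  shows "solvable f u \<and> (\<exists>x\<in>P. f x u = 0)"
proof -
  have Jf_factor: "Jf = M ** J\<psi>"
    using has_derivative_matrix_factor[OF Jf_def[unfolded f_M] J\<psi>_def] .
  have "continuous_on UNIV (\<lambda>(x, v). \<psi> x v)"
    using \<psi>_C1 has_derivative_continuous continuous_at_imp_continuous_on by blast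
  then have "continuous_on P (\<lambda>x. \<psi> x u)"
    by (rule continuous_on_fixed_snd)
  then have "continuous_on P (\<lambda>x. - (matrix_inv Jf *v (M *v gfun \<psi> J\<psi> x u)))"
    unfolding gfun_def
    by (intro continuous_intros linear_continuous_on[OF matrix_vector_mul_bounded_linear]
        continuous_on_compose2[OF linear_continuous_on[OF matrix_vector_mul_bounded_linear]])
      auto
  then obtain x where "x \<in> P" and "- (matrix_inv Jf *v (M *v gfun \<psi> J\<psi> x u)) = x"
    using brouwer[OF P_compact P_convex P_ne] inv by blast
  then have "f x u = 0"
    unfolding f_M gfun_def by (metis fixed_point_imp_zero[OF Jf_factor Jf_inv])
  with \<open>x \<in> P\<close> show ?thesis
    unfolding solvable_def by blast
qed

end
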